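(* Let the initial shared state be the two-qutrit Bell-diagonal state of a qutrit depolarizing channel with parameter $p=p_{00}>1/3$, i.e. Bell probabilities $q_{00}=p$ and $q_{nm}=(1-p)/8$ for $(n,m)\ne(0,0)$. Then the mCAEPP with $m$ carriers per round, conditioned on successful post-selection in every round, purifies the shared state to unit asymptotic fidelity: the fidelity $q_{00}$ of the accepted state tends to $1$ in the limit of many rounds and a large number $m$ of carriers per round.
   Context: Bell-diagonal two-qutrit states are described by probabilities $q=(q_{st})_{s,t\in\{0,1,2\}}$ on the Bell states $|\Phi^{s,t}\rangle=\frac1{\sqrt3}\sum_j e^{2\pi i tj/3}|j,(j+s)\bmod3\rangle$; the fidelity is $q_{00}$. One round of the mCAEPP with $m$ carriers (built from the stabilizer generators $X_1X_m^2,\dots,X_{m-1}X_m^2,Z_0Z_1\cdots Z_m$) acts on $q$ as follows. Pre-processing by local unitaries relabels the probabilities to $r=(r_{00},r_{01},r_{02},r_{10},r_{11},r_{12},r_{20},r_{21},r_{22})=(q_{00},q_{21},q_{22},q_{10},q_{11},q_{12},q_{20},q_{01},q_{02})$. Random error labels $(x_0,z_0)$ with $P(x_0=i,z_0=j)=r_{ij}$ (shared pair) and independent i.i.d. $(x_k,z_k)$, $k=1,\dots,m$ (carriers, passing through the same depolarizing channel) with $P(x_k=0,z_k=0)=p$ and $P(x_k=i,z_k=j)=(1-p)/8$ otherwise, all in $\{0,1,2\}$. The round succeeds iff $z_i\equiv z_m \pmod 3$ for $i=1,\dots,m-1$ and $\sum_{j=0}^m x_j\equiv0\pmod3$; the output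 Bell label is $(s,t)=(x_0,(z_0-z_1)\bmod 3)$, and the new distribution is $q'_{st}=P(\text{success},s,t)/P(\text{success})$. Rounds are iterated on the accepted state. *)

theory Defs
  imports "HOL-Analysis.Analysis"
begin

text \<open>Bell-diagonal two-qutrit states: probability tables q s t with s t in {0,1,2}
  (stored as functions nat => nat => real; only arguments in {0,1,2} matter).\<close>

type_synonym bell_dist = "nat \<Rightarrow> nat \<Rightarrow> real"

definition depol :: "real \<Rightarrow> bell_dist" where
  "depol p = (\<lambda>s t. if s = 0 \<and> t = 0 then p else (1 - p) / 8)"

definition relabel :: "bell_dist \<Rightarrow> bell_dist" where
  "relabel q = (\<lambda>s t.
     if s = 0 \<and> t = 1 then q 2 1
     else if s = 0 \<and> t = 2 then q 2 2
     else if s = 2 \<and> t = 1 then q 0 1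
     else if s = 2 \<and> t = 2 then q 0 2
     else q s t)"

text \<open>Joint probability of success and output label (s,t) in one round with m carriers,
  each carrier having error labels distributed by the depolarizing channel with parameter p.
  Carrier labels are functions xs zs : {1..m} -> {0,1,2}.\<close>
definition succ_joint :: "nat \<Rightarrow> real \<Rightarrow> bell_dist \<Rightarrow> nat \<Rightarrow> nat \<Rightarrow> real" where
  "succ_joint m p q s t =
     (\<Sum>x0\<in>{0..2::nat}. \<Sum>z0\<in>{0..2::nat}.
      \<Sum>xs\<in>({1..m} \<rightarrow>\<^sub>E {0..2::nat}). \<Sum>zs\<in>({1..m} \<rightarrow>\<^sub>E {0..2::nat}).
        (if (\<forall>i\<in>{1..<m}. zs i mod 3 = zs m mod 3)
            \<and> (x0 + (\<Sum>k\<in>{1..m}. xs k)) mod 3 = 0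
            \<and> x0 = s \<and> (z0 + 3 - zs 1) mod 3 = t
         then relabel q x0 z0 * (\<Prod>k\<in>{1..m}. depol p (xs k) (zs k))
         else 0))"

definition succ_prob :: "nat \<Rightarrow> real \<Rightarrow> bell_dist \<Rightarrow> real" where
  "succ_prob m p q = (\<Sum>s\<in>{0..2::nat}. \<Sum>t\<in>{0..2::nat}. succ_joint m p q s t)"

definition mcaepp_round :: "nat \<Rightarrow> real \<Rightarrow> bell_dist \<Rightarrow> bell_dist" where
  "mcaepp_round m p q = (\<lambda>s t. succ_joint m p q s t / succ_prob m p q)"

definition fidelity_after :: "nat \<Rightarrow> real \<Rightarrow> nat \<Rightarrow> real" where
  "fidelity_after m p n = ((mcaepp_round m p ^^ n) (depol p)) 0 0"

end

theory Submission
  imports Defs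
begin

(* After the relabelling, the states reached from depol p stay in the five-parameter family
   q00 = F, q01 = q02 = G, q1t = H, q20 = K, q21 = q22 = L, and a filtered sum over the carrier
   labels shows that one accepted round acts on (F,G,H,K,L) by a fixed nonnegative linear map,
   whose only m-dependence is through delta = ((9p-1)/(6p+2))^m and eps = ((3-3p)/(6p+2))^m.
   For fixed m the ratio (G + (1+delta)(K+L))/F obeys an affine contraction with fixed point
   eps/(delta-eps), and H/F decays geometrically, so the infidelity is eventually below
   2 eps/(delta-eps) = 2 rho^m/(1-rho^m) with rho = (3-3p)/(9p-1). Finally rho < 1 exactly
   when p > 1/3. *)

definition mod3_weight_sum :: "nat set \<Rightarrow> (nat \<Rightarrow> real) \<Rightarrow> nat \<Rightarrow> real" where
  "mod3_weight_sum I w j =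
     (\<Sum>xs\<in>I \<rightarrow>\<^sub>E {0..2::nat}. if (j + (\<Sum>k\<in>I. xs k)) mod 3 = 0 then \<Prod>k\<in>I. w (xs k) else 0)"

lemma mod3_weight_sum_insert:
  assumes "finite I" "i \<notin> I"
  shows "mod3_weight_sum (insert i I) w j = (\<Sum>y\<in>{0..2::nat}. w y * mod3_weight_sum I w (j + y))"
proof -
  let ?ext = "\<lambda>(y::nat, g::nat\<Rightarrow>nat). g(i := y)"
  let ?f = "\<lambda>xs. if (j + (\<Sum>k\<in>insert i I. xs k)) mod 3 = 0 then \<Prod>k\<in>insert i I. w (xs k) else (0::real)"
  have ext: "?f (g(i := y)) =
      w y * (if (j + y + (\<Sum>k\<in>I. g k)) mod 3 = 0 then \<Prod>k\<in>I. w (g k) else 0)" for g y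
  proof -
    have "(\<Sum>k\<in>insert i I. (g(i := y)) k) = y + (\<Sum>k\<in>I. g k)"
      using assms by (subst sum.insert) (auto intro!: sum.cong)
    moreover have "(\<Prod>k\<in>insert i I. w ((g(i := y)) k)) = w y * (\<Prod>k\<in>I. w (g k))"
      using assms by (subst prod.insert) (auto intro!: prod.cong)
    ultimately show ?thesis by (simp add: add.assoc)
  qed
  have "mod3_weight_sum (insert i I) w j = sum ?f (?ext ` ({0..2} \<times> (I \<rightarrow>\<^sub>E {0..2})))"
    unfolding mod3_weight_sum_def PiE_insert_eq by simp
  also have "\<dots> = sum (?f \<circ> ?ext) ({0..2} \<times> (I \<rightarrow>\<^sub>E {0..2}))"
    using inj_combinator[OF assms(2)] by (rule sum.reindex)
  also have "\<dots> = (\<Sum>y\<in>{0..2::nat}. \<Sum>g\<in>I \<rightarrow>\<^sub>E {0..2}. ?f (g(i := y)))"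
    unfolding sum.cartesian_product comp_def by (simp only: case_prod_unfold)
  also have "\<dots> = (\<Sum>y\<in>{0..2::nat}. w y * mod3_weight_sum I w (j + y))"
    by (simp only: ext mod3_weight_sum_def sum_distrib_left add.assoc)
  finally show ?thesis .
qed

(* Roots-of-unity filter: when w 1 = w 2, the transform of w at a primitive cube root of unity
   is w 0 - w 1. *)
lemma mod3_weight_sum_eq:
  assumes "finite I" and "w 2 = w 1"
  shows "mod3_weight_sum I w j =
    (if j mod 3 = 0 then ((w 0 + 2 * w 1) ^ card I + 2 * (w 0 - w 1) ^ card I) / 3
     else ((w 0 + 2 * w 1) ^ card I - (w 0 - w 1) ^ card I) / 3)"
  using assms(1)
proof (induction I arbitrary: j rule: finite_induct)
  case empty
  show ?case by (simp add: mod3_weight_sum_def)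
next
  case (insert i I)
  have "{0..2::nat} = {0, 1, 2}" by auto
  then have "mod3_weight_sum (insert i I) w j =
      w 0 * mod3_weight_sum I w j + w 1 * (mod3_weight_sum I w (j + 1) + mod3_weight_sum I w (j + 2))"
    using mod3_weight_sum_insert[OF insert(1,2)] assms(2) by (simp add: algebra_simps)
  moreover have "card (insert i I) = Suc (card I)" using insert(1,2) by simp
  moreover have "(j + 1) mod 3 = 0 \<longleftrightarrow> j mod 3 = 2" "(j + 2) mod 3 = 0 \<longleftrightarrow> j mod 3 = 1"
    by presburger+
  moreover have "j mod 3 = 0 \<or> j mod 3 = 1 \<or> j mod 3 = 2" by presburger
  ultimately show ?case
    unfolding insert.IH by (elim disjE) (simp_all add: field_simps)
qed

lemma mod3_constant_funs:
  fixes m :: nat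
  assumes "1 \<le> m"
  shows "{zs \<in> {1..m} \<rightarrow>\<^sub>E {0..2::nat}. \<forall>i\<in>{1..<m}. zs i mod 3 = zs m mod 3}
       = (\<lambda>c. restrict (\<lambda>_. c) {1..m}) ` {0..2}"
proof (intro equalityI subsetI)
  fix zs assume "zs \<in> {zs \<in> {1..m} \<rightarrow>\<^sub>E {0..2::nat}. \<forall>i\<in>{1..<m}. zs i mod 3 = zs m mod 3}"
  then have zs: "zs \<in> {1..m} \<rightarrow>\<^sub>E {0..2}" and eq: "\<forall>i\<in>{1..<m}. zs i mod 3 = zs m mod 3"
    by auto
  have zm: "zs m \<in> {0..2}" using PiE_mem[OF zs] assms by simp
  have "zs = restrict (\<lambda>_. zs m) {1..m}"
  proof (rule PiE_ext[OF zs])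
    show "restrict (\<lambda>_. zs m) {1..m} \<in> {1..m} \<rightarrow>\<^sub>E {0..2}" using zm by simp
    fix k assume k: "k \<in> {1..m}"
    have "zs k mod 3 = zs m mod 3"
      using eq k by (cases "k = m") auto
    moreover have "zs k \<in> {0..2}" using PiE_mem[OF zs k] .
    ultimately show "zs k = restrict (\<lambda>_. zs m) {1..m} k" using zm k by auto
  qed
  then show "zs \<in> (\<lambda>c. restrict (\<lambda>_. c) {1..m}) ` {0..2}" using zm by blast
qed (use assms in auto)

lemma sum_mod3_constant_funs:
  fixes m :: nat
  assumes "1 \<le> m"
  shows "(\<Sum>zs\<in>{1..m} \<rightarrow>\<^sub>E {0..2::nat}.
            if \<forall>i\<in>{1..<m}. zs i mod 3 = zs m mod 3 then \<Phi> zs else (0::real))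
       = (\<Sum>c\<in>{0..2}. \<Phi> (restrict (\<lambda>_. c) {1..m}))"
proof -
  have inj: "inj_on (\<lambda>c. restrict (\<lambda>_. c) {1..m}) {0..2::nat}"
    using assms by (intro inj_onI) (metis atLeastAtMost_iff le_refl restrict_apply')
  have "finite ({1..m} \<rightarrow>\<^sub>E {0..2::nat})" by (simp add: finite_PiE)
  then show ?thesis
    by (simp only: sum.inter_filter[symmetric] mod3_constant_funs[OF assms])
      (simp only: sum.reindex[OF inj] comp_def)
qed

(* Success forces x0 = s and all carrier Z-labels equal; the X-labels then contribute
   a mod-3 weight sum. *)
lemma succ_joint_eq_weight_sum:
  assumes m: "1 \<le> m" and s: "s \<le> 2"
  shows "succ_joint m p q s t = (\<Sum>z0\<in>{0..2::nat}. \<Sum>c\<in>{0..2::nat}.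
     if (z0 + 3 - c) mod 3 = t then relabel q s z0 * mod3_weight_sum {1..m} (\<lambda>x. depol p x c) s else 0)"
proof -
  let ?X = "{1..m} \<rightarrow>\<^sub>E {0..2::nat}"
  let ?const = "\<lambda>zs. \<forall>i\<in>{1..<m}. zs i mod 3 = zs m mod 3"
  let ?g = "\<lambda>z0 zs xs. if (s + (\<Sum>k\<in>{1..m}. xs k)) mod 3 = 0 \<and> (z0 + 3 - zs 1) mod 3 = t
              then relabel q s z0 * (\<Prod>k\<in>{1..m}. depol p (xs k) (zs k)) else 0"
  let ?F = "\<Sum>z0\<in>{0..2}. \<Sum>xs\<in>?X. \<Sum>zs\<in>?X. if ?const zs then ?g z0 zs xs else 0"
  have "succ_joint m p q s t = (\<Sum>x0\<in>{0..2::nat}. if x0 = s then ?F else 0)"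
    unfolding succ_joint_def
  proof (intro sum.cong refl)
    fix x0 :: nat
    show "(\<Sum>z0\<in>{0..2}. \<Sum>xs\<in>?X. \<Sum>zs\<in>?X. if ?const zs \<and> (x0 + (\<Sum>k\<in>{1..m}. xs k)) mod 3 = 0
              \<and> x0 = s \<and> (z0 + 3 - zs 1) mod 3 = t
            then relabel q x0 z0 * (\<Prod>k\<in>{1..m}. depol p (xs k) (zs k)) else 0)
        = (if x0 = s then ?F else 0)"
      by (cases "x0 = s") (simp_all add: if_if_eq_conj conj_commute conj_left_commute cong: if_cong)
  qed
  also have "\<dots> = ?F" using s by simp
  also have "\<dots> = (\<Sum>z0\<in>{0..2}. \<Sum>zs\<in>?X. if ?const zs then \<Sum>xs\<in>?X. ?g z0 zs xs else 0)"
  proof (rule sum.cong[OF refl])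
    fix z0
    have "(\<Sum>xs\<in>?X. if ?const zs then ?g z0 zs xs else 0) =
        (if ?const zs then \<Sum>xs\<in>?X. ?g z0 zs xs else 0)" for zs
      by (cases "?const zs") (simp, simp only: if_False sum.neutral_const)
    then show "(\<Sum>xs\<in>?X. \<Sum>zs\<in>?X. if ?const zs then ?g z0 zs xs else 0) =
        (\<Sum>zs\<in>?X. if ?const zs then \<Sum>xs\<in>?X. ?g z0 zs xs else 0)"
      by (subst sum.swap) simp
  qed
  also have "\<dots> = (\<Sum>z0\<in>{0..2}. \<Sum>c\<in>{0..2}. \<Sum>xs\<in>?X. ?g z0 (restrict (\<lambda>_. c) {1..m}) xs)"
    by (simp only: sum_mod3_constant_funs[OF m])
  also have "\<dots> = (\<Sum>z0\<in>{0..2::nat}. \<Sum>c\<in>{0..2::nat}.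
     if (z0 + 3 - c) mod 3 = t then relabel q s z0 * mod3_weight_sum {1..m} (\<lambda>x. depol p x c) s else 0)"
  proof (intro sum.cong refl)
    fix z0 c
    have "(\<Prod>k\<in>{1..m}. depol p (xs k) (restrict (\<lambda>_. c) {1..m} k)) = (\<Prod>k\<in>{1..m}. depol p (xs k) c)"
      for xs by (rule prod.cong) auto
    then show "(\<Sum>xs\<in>?X. ?g z0 (restrict (\<lambda>_. c) {1..m}) xs) =
        (if (z0 + 3 - c) mod 3 = t then relabel q s z0 * mod3_weight_sum {1..m} (\<lambda>x. depol p x c) s else 0)"
      using m by (simp add: mod3_weight_sum_def sum_distrib_left if_distrib cong: if_cong)
  qed
  finally show ?thesis .
qed

(* A carrier with Z-label 0 has X-label weights w0 = p, w1 = w2 = (1-p)/8, of total (3p+1)/4.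
   carrier_bias is ((w0 - w1)/(w0 + 2 w1))^m, carrier_flip the relative weight
   (3 w1/(w0 + 2 w1))^m of m carriers sharing a nonzero Z-label. *)
definition carrier_bias :: "nat \<Rightarrow> real \<Rightarrow> real" where
  "carrier_bias m p = ((9 * p - 1) / (6 * p + 2)) ^ m"

definition carrier_flip :: "nat \<Rightarrow> real \<Rightarrow> real" where
  "carrier_flip m p = ((3 - 3 * p) / (6 * p + 2)) ^ m"

lemma carrier_flip_eq:
  assumes "1/9 < p"
  shows "carrier_flip m p = ((3 - 3 * p) / (9 * p - 1)) ^ m * carrier_bias m p"
  unfolding carrier_flip_def carrier_bias_def power_mult_distrib[symmetric]
proof (intro arg_cong[where f = "\<lambda>x. x ^ m"])
  have "9 * p - 1 \<noteq> 0" using assms by simp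
  then show "(3 - 3 * p) / (6 * p + 2) = (3 - 3 * p) / (9 * p - 1) * ((9 * p - 1) / (6 * p + 2))"
    by simp
qed

lemma carrier_flip_ratio:
  assumes "1/9 < p"
  defines "\<rho> \<equiv> (3 - 3 * p) / (9 * p - 1)"
  shows "carrier_flip m p / (carrier_bias m p - carrier_flip m p) = \<rho> ^ m / (1 - \<rho> ^ m)"
proof -
  have "0 < carrier_bias m p" using assms by (simp add: carrier_bias_def)
  moreover have "carrier_bias m p - \<rho> ^ m * carrier_bias m p = (1 - \<rho> ^ m) * carrier_bias m p"
    by (simp add: algebra_simps)
  ultimately show ?thesis unfolding carrier_flip_eq[OF assms(1)] \<rho>_def by simp
qed

lemma mod3_weight_sum_depol:
  assumes m: "1 \<le> m" and c: "c \<le> 2" and s: "s \<le> 2" and p: "0 \<le> p"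
  shows "mod3_weight_sum {1..m} (\<lambda>x. depol p x c) s = ((3 * p + 1) / 4) ^ m / 3 *
    (if c = 0 then if s = 0 then 1 + 2 * carrier_bias m p else 1 - carrier_bias m p
     else carrier_flip m p)"
proof -
  define A where "A = ((3 * p + 1) / 4) ^ m"
  have s0: "s mod 3 = 0 \<longleftrightarrow> s = 0" using s by auto
  have total: "(p + 2 * ((1 - p) / 8)) ^ m = A"
    unfolding A_def by (intro arg_cong[where f = "\<lambda>x. x ^ m"]) (simp add: field_simps)
  have bias: "(p - (1 - p) / 8) ^ m = A * carrier_bias m p"
    unfolding A_def carrier_bias_def power_mult_distrib[symmetric]
    using p by (intro arg_cong[where f = "\<lambda>x. x ^ m"]) (simp add: field_simps)
  have flip: "((1 - p) / 8 + 2 * ((1 - p) / 8)) ^ m = A * carrier_flip m p"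
    unfolding A_def carrier_flip_def power_mult_distrib[symmetric]
    using p by (intro arg_cong[where f = "\<lambda>x. x ^ m"]) (simp add: field_simps)
  have "mod3_weight_sum {1..m} (\<lambda>x. depol p x c) s =
      (if s = 0 then ((depol p 0 c + 2 * depol p 1 c) ^ m + 2 * (depol p 0 c - depol p 1 c) ^ m) / 3
       else ((depol p 0 c + 2 * depol p 1 c) ^ m - (depol p 0 c - depol p 1 c) ^ m) / 3)"
    by (simp add: mod3_weight_sum_eq depol_def s0)
  also have "\<dots> = A / 3 *
    (if c = 0 then if s = 0 then 1 + 2 * carrier_bias m p else 1 - carrier_bias m p
     else carrier_flip m p)"
  proof (cases "c = 0")
    case True
    then have "depol p 0 c = p" "depol p 1 c = (1 - p) / 8" by (simp_all add: depol_def)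
    then show ?thesis using True by (simp only: total bias) (simp add: field_simps)
  next
    case False
    then have "depol p 0 c = (1 - p) / 8" "depol p 1 c = (1 - p) / 8" by (simp_all add: depol_def)
    then show ?thesis using False m by (simp only: flip diff_self power_0_left) (simp add: field_simps)
  qed
  finally show ?thesis unfolding A_def .
qed

type_synonym sym_state = "real \<times> real \<times> real \<times> real \<times> real"

definition sym_dist :: "sym_state \<Rightarrow> bell_dist" where
  "sym_dist = (\<lambda>(F, G, H, K, L) s t.
     if s = 0 then (if t = 0 then F else G) else if s = 1 then H else if t = 0 then K else L)"

fun sym_mass :: "sym_state \<Rightarrow> real" where
  "sym_mass (F, G, H, K, L) = F + 2 * G + 3 * H + K + 2 * L"

(* Unnormalised action of one round on the family, with delta = carrier_bias, eps = carrier_flip. *)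
fun sym_round :: "real \<Rightarrow> real \<Rightarrow> sym_state \<Rightarrow> sym_state" where
  "sym_round \<delta> \<epsilon> (F, G, H, K, L) =
     ((1 + 2 * \<delta>) * F + 2 * \<epsilon> * L, (1 + 2 * \<delta>) * L + \<epsilon> * (F + L), (1 - \<delta> + 2 * \<epsilon>) * H,
      (1 - \<delta>) * K + 2 * \<epsilon> * G, (1 - \<delta> + \<epsilon>) * G + \<epsilon> * K)"

lemma succ_joint_sym_dist:
  assumes m: "1 \<le> m" and p: "0 \<le> p" and s: "s \<le> 2" and t: "t \<le> 2"
    and q: "\<And>s t. s \<le> 2 \<Longrightarrow> t \<le> 2 \<Longrightarrow> q s t = sym_dist u s t / T"
  shows "succ_joint m p q s t = ((3 * p + 1) / 4) ^ m / (3 * T) *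
           sym_dist (sym_round (carrier_bias m p) (carrier_flip m p) u) s t"
proof -
  obtain F G H K L where u: "u = (F, G, H, K, L)" by (cases u) auto
  define \<delta> where "\<delta> = carrier_bias m p"
  define \<epsilon> where "\<epsilon> = carrier_flip m p"
  define A where "A = ((3 * p + 1) / 4) ^ m"
  define f where "f c = (if c = 0 then if s = 0 then 1 + 2 * \<delta> else 1 - \<delta> else \<epsilon>)" for c :: nat
  have weight: "mod3_weight_sum {1..m} (\<lambda>x. depol p x c) s = A / 3 * f c" if "c \<in> {0..2}" for c
    unfolding A_def f_def \<delta>_def \<epsilon>_def using mod3_weight_sum_depol[OF m _ s p] that by simp
  have "succ_joint m p q s t = (\<Sum>z0\<in>{0..2}. \<Sum>c\<in>{0..2}.
      if (z0 + 3 - c) mod 3 = t then relabel q s z0 * (A / 3 * f c) else 0)"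
    unfolding succ_joint_eq_weight_sum[OF m s] by (intro sum.cong refl) (simp only: weight)
  also have "\<dots> = A / (3 * T) * sym_dist (sym_round \<delta> \<epsilon> u) s t"
  proof -
    have "{0..2::nat} = {0, 1, 2}" by auto
    moreover have "s = 0 \<or> s = 1 \<or> s = 2" "t = 0 \<or> t = 1 \<or> t = 2" using s t by auto
    ultimately show ?thesis
      by (elim disjE)
        (simp_all add: relabel_def q sym_dist_def u f_def algebra_simps
          add_divide_distrib diff_divide_distrib)
  qed
  finally show ?thesis unfolding A_def \<delta>_def \<epsilon>_def .
qed

lemma mcaepp_round_sym_dist:
  assumes m: "1 \<le> m" and p: "0 \<le> p" and s: "s \<le> 2" and t: "t \<le> 2" and T: "T \<noteq> 0"
    and q: "\<And>s t. s \<le> 2 \<Longrightarrow> t \<le> 2 \<Longrightarrow> q s t = sym_dist u s t / T"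
  defines "u' \<equiv> sym_round (carrier_bias m p) (carrier_flip m p) u"
  shows "mcaepp_round m p q s t = sym_dist u' s t / sym_mass u'"
proof -
  define k where "k = ((3 * p + 1) / 4) ^ m / (3 * T)"
  have k: "k \<noteq> 0" using p T unfolding k_def by simp
  have joint: "succ_joint m p q s t = k * sym_dist u' s t" if "s \<le> 2" "t \<le> 2" for s t
    unfolding k_def u'_def using succ_joint_sym_dist[OF m p that q] .
  have "{0..2::nat} = {0, 1, 2}" by auto
  then have "succ_prob m p q = k * sym_mass u'"
    unfolding succ_prob_def by (simp add: joint sym_dist_def split: prod.split) (simp add: field_simps)
  then show ?thesis
    unfolding mcaepp_round_def using joint[OF s t] k by simp
qed

fun sym_positive :: "sym_state \<Rightarrow> bool" where
  "sym_positive (F, G, H, K, L) \<longleftrightarrow> 0 < F \<and> 0 \<le> G \<and> 0 \<le> H \<and> 0 \<le> K \<and> 0 \<le> L"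

lemma sym_positive_mass: "sym_positive v \<Longrightarrow> 0 < sym_mass v"
  by (cases v) auto

lemma sym_round_positive:
  assumes "0 \<le> \<delta>" "\<delta> \<le> 1" "0 \<le> \<epsilon>" "sym_positive v"
  shows "sym_positive (sym_round \<delta> \<epsilon> v)"
  using assms by (cases v) (auto intro!: add_pos_nonneg)

lemma mcaepp_round_iterate:
  assumes m: "1 \<le> m" and p: "1/9 \<le> p" "p \<le> 1" and s: "s \<le> 2" and t: "t \<le> 2"
  defines "v n \<equiv> (sym_round (carrier_bias m p) (carrier_flip m p) ^^ n)
                    (p, (1 - p) / 8, (1 - p) / 8, (1 - p) / 8, (1 - p) / 8)"
  shows "(mcaepp_round m p ^^ n) (depol p) s t = sym_dist (v n) s t / sym_mass (v n)"
  using s t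
proof (induction n arbitrary: s t)
  case 0
  have "sym_mass (v 0) = 1" unfolding v_def by (simp add: field_simps)
  then show ?case using 0 by (auto simp: v_def depol_def sym_dist_def)
next
  case (Suc n)
  have "0 \<le> carrier_bias m p" "carrier_bias m p \<le> 1" "0 \<le> carrier_flip m p"
    using p by (simp_all add: carrier_bias_def carrier_flip_def power_le_one)
  then have "sym_positive (v n)" for n
    unfolding v_def using p by (induction n) (simp_all add: sym_round_positive)
  then have "sym_mass (v n) \<noteq> 0" using sym_positive_mass by (metis less_irrefl)
  moreover have "0 \<le> p" using p by simp
  ultimately show ?case
    using mcaepp_round_sym_dist[OF m _ Suc.prems _ Suc.IH] by (simp add: v_def)
qed

lemma affine_recurrence_le:
  fixes r :: "nat \<Rightarrow> real"
  assumes a: "0 \<le> a" and step: "\<And>n. r (Suc n) \<le> a * r n + (1 - a) * c"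
  shows "r n \<le> c + a ^ n * (r 0 - c)"
proof (induction n)
  case (Suc n)
  have "r (Suc n) \<le> a * r n + (1 - a) * c" by (rule step)
  also have "\<dots> \<le> a * (c + a ^ n * (r 0 - c)) + (1 - a) * c"
    using Suc.IH a by (simp add: mult_left_mono)
  also have "\<dots> = c + a ^ Suc n * (r 0 - c)" by (simp add: algebra_simps)
  finally show ?case .
qed simp

(* The weight 1 + delta on K and L is what makes this ratio contract under sym_round. *)
fun sym_potential :: "real \<Rightarrow> sym_state \<Rightarrow> real" where
  "sym_potential \<delta> (F, G, H, K, L) = (G + (1 + \<delta>) * (K + L)) / F"

fun sym_phase_ratio :: "sym_state \<Rightarrow> real" where
  "sym_phase_ratio (F, G, H, K, L) = H / F"

lemma sym_potential_round:
  assumes \<epsilon>: "0 \<le> \<epsilon>" "5 * \<epsilon> \<le> \<delta>" and \<delta>: "0 < \<delta>" "\<delta> \<le> 1" and v: "sym_positive v"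
  defines "a \<equiv> (1 + \<delta> + \<epsilon>) / (1 + 2 * \<delta>)"
  shows "sym_potential \<delta> (sym_round \<delta> \<epsilon> v) \<le> a * sym_potential \<delta> v + (1 - a) * (\<epsilon> / (\<delta> - \<epsilon>))"
proof -
  obtain F G H K L where v_eq: "v = (F, G, H, K, L)" by (cases v) auto
  have pos: "0 < F" "0 \<le> G" "0 \<le> K" "0 \<le> L" using v v_eq by simp_all
  define W where "W = G + (1 + \<delta>) * (K + L)"
  define F' where "F' = (1 + 2 * \<delta>) * F + 2 * \<epsilon> * L"
  define W' where "W' = ((1 + 2 * \<delta>) * L + \<epsilon> * (F + L))
                         + (1 + \<delta>) * (((1 - \<delta>) * K + 2 * \<epsilon> * G) + ((1 - \<delta> + \<epsilon>) * G + \<epsilon> * K))"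
  have "(1 + \<delta> + \<epsilon>) * W + \<epsilon> * F - W' =
      (\<delta> * \<delta> + \<epsilon> * \<delta>) * L + 2 * \<delta> * (1 + \<delta>) * K + (\<delta> + \<delta> * \<delta> - 2 * \<epsilon> - 3 * \<epsilon> * \<delta>) * G"
    unfolding W_def W'_def by (simp add: algebra_simps)
  moreover have "0 \<le> \<delta> + \<delta> * \<delta> - 2 * \<epsilon> - 3 * \<epsilon> * \<delta>"
    using \<epsilon> \<delta> mult_left_le[of \<delta> \<epsilon>] mult_nonneg_nonneg[of \<delta> \<delta>] by linarith
  ultimately have W': "W' \<le> (1 + \<delta> + \<epsilon>) * W + \<epsilon> * F"
    using pos \<epsilon> by (smt (verit) mult_nonneg_nonneg)
  define l where "l = 1 + 2 * \<delta>"
  have l: "0 < l" and gap: "0 < \<delta> - \<epsilon>" unfolding l_def using \<epsilon> \<delta> by simp_all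
  have "W' / F' \<le> ((1 + \<delta> + \<epsilon>) * W + \<epsilon> * F) / (l * F)"
    using W' pos \<epsilon> unfolding W_def F'_def l_def by (intro frac_le) auto
  also have "\<dots> = a * (W / F) + \<epsilon> / l"
    unfolding a_def l_def[symmetric] using pos l by (simp add: field_simps)
  also have "\<epsilon> / l = (1 - a) * (\<epsilon> / (\<delta> - \<epsilon>))"
  proof -
    have "1 - a = (\<delta> - \<epsilon>) / l"
      unfolding a_def l_def[symmetric] using l by (simp add: field_simps) (simp add: l_def)
    then show ?thesis using gap by simp
  qed
  finally show ?thesis unfolding W_def W'_def F'_def v_eq by simp
qed

lemma sym_phase_ratio_round:
  assumes "0 \<le> \<epsilon>" "0 \<le> \<delta>" "\<delta> \<le> 1" "sym_positive v"
  shows "sym_phase_ratio (sym_round \<delta> \<epsilon> v) \<le> (1 - \<delta> + 2 * \<epsilon>) / (1 + 2 * \<delta>) * sym_phase_ratio v"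
proof -
  obtain F G H K L where v_eq: "v = (F, G, H, K, L)" by (cases v) auto
  have pos: "0 < F" "0 \<le> H" "0 \<le> L" using assms(4) v_eq by simp_all
  have "(1 - \<delta> + 2 * \<epsilon>) * H / ((1 + 2 * \<delta>) * F + 2 * \<epsilon> * L) \<le> (1 - \<delta> + 2 * \<epsilon>) * H / ((1 + 2 * \<delta>) * F)"
    using assms pos by (intro divide_left_mono mult_pos_pos add_pos_nonneg) auto
  then show ?thesis using v_eq by simp
qed

lemma sym_fidelity_defect_le:
  assumes "0 \<le> \<delta>" "sym_positive v"
  shows "\<bar>fst v / sym_mass v - 1\<bar> \<le> 2 * sym_potential \<delta> v + 3 * sym_phase_ratio v"
proof -
  obtain F G H K L where v_eq: "v = (F, G, H, K, L)" by (cases v) auto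
  have pos: "0 < F" "0 \<le> G" "0 \<le> H" "0 \<le> K" "0 \<le> L" using assms(2) v_eq by simp_all
  define E where "E = 2 * G + 3 * H + K + 2 * L"
  have E: "0 \<le> E" unfolding E_def using pos by simp
  have "\<bar>F / (F + E) - 1\<bar> = E / (F + E)" using pos E by (simp add: field_simps)
  also have "\<dots> \<le> E / F" using pos E by (intro divide_left_mono) auto
  also have "\<dots> \<le> (2 * (G + (1 + \<delta>) * (K + L)) + 3 * H) / F"
    using pos assms(1) unfolding E_def by (intro divide_right_mono) (auto simp: algebra_simps)
  finally show ?thesis using v_eq by (simp add: E_def add_divide_distrib algebra_simps)
qed

lemma sym_round_fidelity_eventually:
  assumes \<delta>: "0 < \<delta>" "\<delta> \<le> 1" and \<epsilon>: "0 \<le> \<epsilon>" "5 * \<epsilon> \<le> \<delta>" and v: "sym_positive v"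
    and \<eta>: "2 * (\<epsilon> / (\<delta> - \<epsilon>)) < \<eta>"
  shows "\<forall>\<^sub>F n in sequentially.
           \<bar>fst ((sym_round \<delta> \<epsilon> ^^ n) v) / sym_mass ((sym_round \<delta> \<epsilon> ^^ n) v) - 1\<bar> < \<eta>"
proof -
  define w where "w n = (sym_round \<delta> \<epsilon> ^^ n) v" for n
  define a where "a = (1 + \<delta> + \<epsilon>) / (1 + 2 * \<delta>)"
  define b where "b = (1 - \<delta> + 2 * \<epsilon>) / (1 + 2 * \<delta>)"
  define c where "c = \<epsilon> / (\<delta> - \<epsilon>)"
  have a: "0 \<le> a" "a < 1" and b: "0 \<le> b" "b < 1" unfolding a_def b_def using \<delta> \<epsilon> by simp_all
  have pos: "sym_positive (w n)" for n
    unfolding w_def using \<delta> \<epsilon> v by (induction n) (simp_all add: sym_round_positive)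
  have potential: "sym_potential \<delta> (w n) \<le> c + a ^ n * (sym_potential \<delta> (w 0) - c)" for n
  proof (rule affine_recurrence_le[where r = "\<lambda>n. sym_potential \<delta> (w n)", OF a(1)])
    show "sym_potential \<delta> (w (Suc k)) \<le> a * sym_potential \<delta> (w k) + (1 - a) * c" for k
      using sym_potential_round[OF \<epsilon> \<delta> pos[of k]] unfolding a_def c_def w_def by simp
  qed
  have phase: "sym_phase_ratio (w n) \<le> b ^ n * sym_phase_ratio (w 0)" for n
  proof -
    have "sym_phase_ratio (w n) \<le> 0 + b ^ n * (sym_phase_ratio (w 0) - 0)"
    proof (rule affine_recurrence_le[where r = "\<lambda>n. sym_phase_ratio (w n)", OF b(1)])
      show "sym_phase_ratio (w (Suc k)) \<le> b * sym_phase_ratio (w k) + (1 - b) * 0" for k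
        using sym_phase_ratio_round[OF \<epsilon>(1) _ \<delta>(2) pos[of k]] \<delta>(1) unfolding b_def w_def by simp
    qed
    then show ?thesis by simp
  qed
  have defect: "\<bar>fst (w n) / sym_mass (w n) - 1\<bar> \<le>
      2 * (c + a ^ n * (sym_potential \<delta> (w 0) - c)) + 3 * (b ^ n * sym_phase_ratio (w 0))" for n
    using sym_fidelity_defect_le[OF less_imp_le[OF \<delta>(1)] pos[of n]] potential[of n] phase[of n] by argo
  have "(\<lambda>n. 2 * (c + a ^ n * (sym_potential \<delta> (w 0) - c)) + 3 * (b ^ n * sym_phase_ratio (w 0)))
          \<longlonglongrightarrow> 2 * (c + 0 * (sym_potential \<delta> (w 0) - c)) + 3 * (0 * sym_phase_ratio (w 0))"
    using a b by (intro tendsto_intros LIMSEQ_power_zero) simp_all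
  then have "\<forall>\<^sub>F n in sequentially.
      2 * (c + a ^ n * (sym_potential \<delta> (w 0) - c)) + 3 * (b ^ n * sym_phase_ratio (w 0)) < \<eta>"
    using \<eta> unfolding c_def by (intro order_tendstoD(2)) simp_all
  then show ?thesis
    unfolding w_def[symmetric] by eventually_elim (use defect in \<open>rule le_less_trans\<close>)
qed

lemma fidelity_after_eq:
  assumes "1 \<le> m" "1/9 \<le> p" "p \<le> 1"
  defines "v n \<equiv> (sym_round (carrier_bias m p) (carrier_flip m p) ^^ n)
                    (p, (1 - p) / 8, (1 - p) / 8, (1 - p) / 8, (1 - p) / 8)"
  shows "fidelity_after m p n = fst (v n) / sym_mass (v n)"
  using mcaepp_round_iterate[OF assms(1-3), of 0 0 n]
  unfolding fidelity_after_def v_def by (simp add: sym_dist_def split: prod.splits)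

lemma fidelity_after_eventually:
  assumes m: "1 \<le> m" and p: "1/9 < p" "p \<le> 1"
    and small: "5 * carrier_flip m p \<le> carrier_bias m p"
    and \<eta>: "2 * (carrier_flip m p / (carrier_bias m p - carrier_flip m p)) < \<eta>"
  shows "\<forall>\<^sub>F n in sequentially. \<bar>fidelity_after m p n - 1\<bar> < \<eta>"
proof -
  have "0 < carrier_bias m p" "carrier_bias m p \<le> 1" "0 \<le> carrier_flip m p"
    using p by (simp_all add: carrier_bias_def carrier_flip_def power_le_one)
  moreover have "sym_positive (p, (1 - p) / 8, (1 - p) / 8, (1 - p) / 8, (1 - p) / 8)"
    using p by simp
  ultimately show ?thesis
    using sym_round_fidelity_eventually[OF _ _ _ small _ \<eta>] m p by (simp add: fidelity_after_eq)
qed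

theorem theorem1:
  fixes p :: real
  assumes "1/3 < p" and "p \<le> 1"
  shows "\<forall>\<epsilon>>0. \<forall>\<^sub>F m in sequentially. \<forall>\<^sub>F n in sequentially.
           \<bar>fidelity_after m p n - 1\<bar> < \<epsilon>"
proof (intro allI impI)
  fix \<eta> :: real assume "0 < \<eta>"
  define \<rho> where "\<rho> = (3 - 3 * p) / (9 * p - 1)"
  have "0 \<le> \<rho>" "\<rho> < 1" unfolding \<rho>_def using assms by simp_all
  then have power: "(\<lambda>m. \<rho> ^ m) \<longlonglongrightarrow> 0" by (intro LIMSEQ_power_zero) simp
  then have "(\<lambda>m. 2 * (\<rho> ^ m / (1 - \<rho> ^ m))) \<longlonglongrightarrow> 2 * (0 / (1 - 0))"
    by (intro tendsto_mult tendsto_divide tendsto_diff tendsto_const) simp_all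
  then have "\<forall>\<^sub>F m in sequentially. 2 * (\<rho> ^ m / (1 - \<rho> ^ m)) < \<eta>"
    using \<open>0 < \<eta>\<close> by (intro order_tendstoD(2)) simp_all
  moreover have "\<forall>\<^sub>F m in sequentially. \<rho> ^ m < 1/5"
    using power by (rule order_tendstoD(2)) simp
  moreover have "\<forall>\<^sub>F m in sequentially. 1 \<le> m" by (rule eventually_ge_at_top)
  ultimately show "\<forall>\<^sub>F m in sequentially. \<forall>\<^sub>F n in sequentially. \<bar>fidelity_after m p n - 1\<bar> < \<eta>"
  proof eventually_elim
    case (elim m)
    have "(5 * \<rho> ^ m) * carrier_bias m p \<le> 1 * carrier_bias m p"
      using elim assms by (intro mult_right_mono) (simp_all add: carrier_bias_def)
    then have "5 * carrier_flip m p \<le> carrier_bias m p"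
      using assms carrier_flip_eq[of p m] unfolding \<rho>_def by simp
    then show ?case
      using fidelity_after_eventually elim assms carrier_flip_ratio[of p m] unfolding \<rho>_def
      by simp
  qed
qed

end
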